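(* Let $f$ be a positive Boolean function on $B^n$ and let $S$ be a nonempty set of $k$ relevant variables of $f$. Then there exist at least $k+1$ extremal points of $f$ corresponding to $S$.
   Context: $B=\{0,1\}$; $\mathbf{x}\preceq\mathbf{y}$ means $(\mathbf{x})_i=1\Rightarrow(\mathbf{y})_i=1$ for all $i$. $f$ is positive if $f(\mathbf{x})=1$ and $\mathbf{x}\preceq\mathbf{y}$ imply $f(\mathbf{y})=1$. Maximal zeros (resp. minimal ones) are $\preceq$-maximal false points (resp. $\preceq$-minimal true points); extremal points are maximal zeros and minimal ones. A variable $x_i$ is relevant if $f_{|x_i=0}\not\equiv f_{|x_i=1}$. A maximal zero $\mathbf{y}$ corresponds to $x_i$ if $(\mathbf{y})_i=0$; a minimal one $\mathbf{y}$ corresponds to $x_i$ if $(\mathbf{y})_i=1$. An extremal point corresponds to a set $S$ of variables if it corresponds to at least one variable in $S$. *)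

theory Defs
  imports Main
begin

text \<open>Points of B^n are boolean lists of length n; True = 1, False = 0.
  A Boolean function on B^n is f :: bool list => bool, only its values on the cube matter.\<close>

definition cube :: "nat \<Rightarrow> bool list set" where
  "cube n = {x. length x = n}"

definition pleq :: "bool list \<Rightarrow> bool list \<Rightarrow> bool" where
  "pleq x y \<longleftrightarrow> length x = length y \<and> (\<forall>i<length x. x ! i \<longrightarrow> y ! i)"

definition positive_fun :: "nat \<Rightarrow> (bool list \<Rightarrow> bool) \<Rightarrow> bool" where
  "positive_fun n f \<longleftrightarrow> (\<forall>x\<in>cube n. \<forall>y\<in>cube n. f x \<and> pleq x y \<longrightarrow> f y)"

definition max_zero :: "nat \<Rightarrow> (bool list \<Rightarrow> bool) \<Rightarrow> bool list \<Rightarrow> bool" where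
  "max_zero n f y \<longleftrightarrow> y \<in> cube n \<and> \<not> f y \<and>
     (\<forall>z\<in>cube n. \<not> f z \<and> pleq y z \<longrightarrow> z = y)"

definition min_one :: "nat \<Rightarrow> (bool list \<Rightarrow> bool) \<Rightarrow> bool list \<Rightarrow> bool" where
  "min_one n f y \<longleftrightarrow> y \<in> cube n \<and> f y \<and>
     (\<forall>z\<in>cube n. f z \<and> pleq z y \<longrightarrow> z = y)"

definition extremal :: "nat \<Rightarrow> (bool list \<Rightarrow> bool) \<Rightarrow> bool list \<Rightarrow> bool" where
  "extremal n f y \<longleftrightarrow> max_zero n f y \<or> min_one n f y"

definition relevant :: "nat \<Rightarrow> (bool list \<Rightarrow> bool) \<Rightarrow> nat \<Rightarrow> bool" where
  "relevant n f i \<longleftrightarrow> i < n \<and> (\<exists>x\<in>cube n. f (x[i := False]) \<noteq> f (x[i := True]))"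

definition corresponds_to_var :: "nat \<Rightarrow> (bool list \<Rightarrow> bool) \<Rightarrow> bool list \<Rightarrow> nat \<Rightarrow> bool" where
  "corresponds_to_var n f y i \<longleftrightarrow>
     (max_zero n f y \<and> \<not> y ! i) \<or> (min_one n f y \<and> y ! i)"

definition corresponds_to_set :: "nat \<Rightarrow> (bool list \<Rightarrow> bool) \<Rightarrow> bool list \<Rightarrow> nat set \<Rightarrow> bool" where
  "corresponds_to_set n f y S \<longleftrightarrow> extremal n f y \<and> (\<exists>i\<in>S. corresponds_to_var n f y i)"

end

theory Submission
  imports Defs
begin

text \<open>Pick \<open>i \<in> S\<close> and split the remaining variables into those relevant
  for the cofactor \<open>f\<^sub>0 = f|x\<^sub>i=0\<close> and the others, which are then relevant for \<open>f\<^sub>1 = f|x\<^sub>i=1\<close>.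
  Every extremal point of a cofactor lifts injectively to an extremal point of \<open>f\<close> of the same
  kind, differing from it at most in coordinate \<open>i\<close>; the lifts from \<open>f\<^sub>0\<close> and from \<open>f\<^sub>1\<close> never
  collide, because a collision would make a variable relevant for \<open>f\<^sub>1\<close> relevant for \<open>f\<^sub>0\<close> too.
  The induction hypotheses give \<open>|S| - 1\<close> such points plus one for each nonempty part, and
  an empty part is made up for by a point coming from \<open>x\<^sub>i\<close> itself: a maximal zero with
  \<open>x\<^sub>i = 0\<close>, which is not a lift from \<open>f\<^sub>1\<close>, or a minimal one with \<open>x\<^sub>i = 1\<close>, which is not a
  lift from \<open>f\<^sub>0\<close>.\<close>

lemma pleq_refl: "pleq x x"
  by (simp add: pleq_def)

lemma pleq_trans: "pleq x y \<Longrightarrow> pleq y z \<Longrightarrow> pleq x z"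
  by (auto simp: pleq_def)

lemma pleq_update_False: "pleq (x[i := False]) x"
  unfolding pleq_def by (cases "i < length x") (auto simp: nth_list_update)

lemma pleq_update_True: "pleq x (x[i := True])"
  unfolding pleq_def by (cases "i < length x") (auto simp: nth_list_update)

lemma pleq_update_mono: "pleq x y \<Longrightarrow> pleq (x[i := b]) (y[i := b])"
  unfolding pleq_def by (cases "i < length x") (auto simp: nth_list_update)

lemma cube_update: "x \<in> cube n \<Longrightarrow> x[i := b] \<in> cube n"
  by (simp add: cube_def)

lemma length_cube: "x \<in> cube n \<Longrightarrow> length x = n"
  by (simp add: cube_def)

lemma finite_cube: "finite (cube n)"
proof -
  have "cube n = {xs. set xs \<subseteq> UNIV \<and> length xs = n}"
    by (auto simp: cube_def)
  then show ?thesis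
    using finite_lists_length_eq[of "UNIV :: bool set" n] by simp
qed

lemma positive_funD:
  "positive_fun n f \<Longrightarrow> x \<in> cube n \<Longrightarrow> y \<in> cube n \<Longrightarrow> f x \<Longrightarrow> pleq x y \<Longrightarrow> f y"
  unfolding positive_fun_def by blast

lemma min_one_not_max_zero: "min_one n f y \<Longrightarrow> \<not> max_zero n f y"
  by (simp add: min_one_def max_zero_def)

lemma extremal_in_cube: "extremal n f y \<Longrightarrow> y \<in> cube n"
  by (auto simp: extremal_def min_one_def max_zero_def)

definition ones :: "bool list \<Rightarrow> nat" where
  "ones x = card {j. j < length x \<and> x ! j}"

lemma ones_le_length: "ones x \<le> length x"
  unfolding ones_def by (rule order.trans[OF card_mono[of "{..<length x}"]]) auto

lemma ones_strict_mono:
  assumes "pleq x y" "x \<noteq> y"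
  shows "ones x < ones y"
proof -
  have len: "length x = length y"
    using assms(1) by (simp add: pleq_def)
  then obtain j where j: "j < length x" "x ! j \<noteq> y ! j"
    using assms(2) nth_equalityI by blast
  then have "\<not> x ! j" "y ! j"
    using assms(1) by (auto simp: pleq_def)
  then have "{j. j < length x \<and> x ! j} \<subset> {j. j < length y \<and> y ! j}"
    using assms(1) j len by (auto simp: pleq_def)
  then show ?thesis
    unfolding ones_def by (simp add: psubset_card_mono)
qed

lemma ex_pleq_minimal:
  assumes "P a"
  shows "\<exists>m. P m \<and> pleq m a \<and> (\<forall>z. P z \<and> pleq z m \<longrightarrow> z = m)"
proof -
  obtain m where m: "P m \<and> pleq m a" and least: "\<And>z. P z \<and> pleq z a \<Longrightarrow> ones m \<le> ones z"
    using ex_has_least_nat[of "\<lambda>z. P z \<and> pleq z a" a ones] assms pleq_refl by blast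
  have "z = m" if "P z" "pleq z m" for z
  proof -
    have "ones m \<le> ones z"
      using least that m pleq_trans by blast
    then show ?thesis
      using ones_strict_mono[OF that(2)] by fastforce
  qed
  then show ?thesis
    using m by blast
qed

lemma ex_pleq_maximal:
  assumes "P a"
  shows "\<exists>m. P m \<and> pleq a m \<and> (\<forall>z. P z \<and> pleq m z \<longrightarrow> z = m)"
proof -
  let ?co_ones = "\<lambda>z. length a - ones z"
  obtain m where m: "P m \<and> pleq a m" and least: "\<And>z. P z \<and> pleq a z \<Longrightarrow> ?co_ones m \<le> ?co_ones z"
    using ex_has_least_nat[of "\<lambda>z. P z \<and> pleq a z" a ?co_ones] assms pleq_refl by blast
  have "z = m" if "P z" "pleq m z" for z
  proof -
    have "pleq a z"
      using that m pleq_trans by blast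
    then have "?co_ones m \<le> ?co_ones z" "ones z \<le> length a"
      using least that ones_le_length[of z] by (auto simp: pleq_def)
    then show ?thesis
      using ones_strict_mono[OF that(2)] by fastforce
  qed
  then show ?thesis
    using m by blast
qed

lemma ex_min_one_below:
  assumes "x \<in> cube n" "f x"
  obtains y where "min_one n f y" "pleq y x"
  using ex_pleq_minimal[of "\<lambda>z. z \<in> cube n \<and> f z" x] assms
  by (auto simp: min_one_def)

lemma ex_max_zero_above:
  assumes "x \<in> cube n" "\<not> f x"
  obtains y where "max_zero n f y" "pleq x y"
  using ex_pleq_maximal[of "\<lambda>z. z \<in> cube n \<and> \<not> f z" x] assms
  by (auto simp: max_zero_def)

lemma relevant_imp_ex_min_one:
  assumes pos: "positive_fun n f" and rel: "relevant n f i"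
  obtains y where "min_one n f y" "y ! i"
proof -
  obtain x where x: "x \<in> cube n" "f (x[i := False]) \<noteq> f (x[i := True])"
    using rel by (auto simp: relevant_def)
  have "f (x[i := False]) \<longrightarrow> f (x[i := True])"
    using positive_funD[OF pos] cube_update[OF x(1)] pleq_trans[OF pleq_update_False pleq_update_True]
    by blast
  then have false: "\<not> f (x[i := False])" and true: "f (x[i := True])"
    using x(2) by auto
  obtain y where y: "min_one n f y" "pleq y (x[i := True])"
    using ex_min_one_below[of "x[i := True]" n f, OF cube_update[OF x(1)] true] .
  have "y ! i"
  proof (rule ccontr)
    assume "\<not> y ! i"
    then have "y[i := False] = y"
      using list_update_id[of y i] by simp
    then have "pleq y (x[i := False])"
      using pleq_update_mono[OF y(2), of i False] by simp
    then show False
      using positive_funD[OF pos] y(1) false cube_update[OF x(1)] by (auto simp: min_one_def)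
  qed
  with y(1) show ?thesis ..
qed

lemma relevant_imp_ex_max_zero:
  assumes pos: "positive_fun n f" and rel: "relevant n f i"
  obtains y where "max_zero n f y" "\<not> y ! i"
proof -
  obtain x where x: "x \<in> cube n" "f (x[i := False]) \<noteq> f (x[i := True])"
    using rel by (auto simp: relevant_def)
  have "f (x[i := False]) \<longrightarrow> f (x[i := True])"
    using positive_funD[OF pos] cube_update[OF x(1)] pleq_trans[OF pleq_update_False pleq_update_True]
    by blast
  then have false: "\<not> f (x[i := False])" and true: "f (x[i := True])"
    using x(2) by auto
  obtain y where y: "max_zero n f y" "pleq (x[i := False]) y"
    using ex_max_zero_above[of "x[i := False]" n f, OF cube_update[OF x(1)] false] .
  have "\<not> y ! i"
  proof
    assume "y ! i"
    then have "y[i := True] = y"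
      using list_update_id[of y i] by simp
    then have "pleq (x[i := True]) y"
      using pleq_update_mono[OF y(2), of i True] by simp
    then show False
      using positive_funD[OF pos] y(1) true cube_update[OF x(1)] by (auto simp: max_zero_def)
  qed
  with y(1) show ?thesis ..
qed

lemma corresponds_to_var_imp_relevant:
  assumes "corresponds_to_var n f y j" "j < n"
  shows "relevant n f j"
proof (cases "min_one n f y")
  case True
  then have y: "y \<in> cube n" "f y" "y ! j"
    using assms(1) min_one_not_max_zero by (auto simp: min_one_def corresponds_to_var_def)
  have "y[j := False] \<noteq> y"
    using y assms(2) length_cube[OF y(1)] by (auto dest: arg_cong[where f = "\<lambda>x. x ! j"])
  then have "\<not> f (y[j := False])"
    using True cube_update[OF y(1)] pleq_update_False by (auto simp: min_one_def)
  moreover have "y[j := True] = y"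
    using y(3) list_update_id[of y j] by simp
  ultimately have "f (y[j := False]) \<noteq> f (y[j := True])"
    using y(2) by simp
  then show ?thesis
    unfolding relevant_def using y(1) assms(2) by (intro conjI bexI[of _ y])
next
  case False
  then have y: "y \<in> cube n" "\<not> f y" "max_zero n f y" "\<not> y ! j"
    using assms(1) by (auto simp: max_zero_def corresponds_to_var_def)
  have "y[j := True] \<noteq> y"
    using y assms(2) length_cube[OF y(1)] by (auto dest: arg_cong[where f = "\<lambda>x. x ! j"])
  then have "f (y[j := True])"
    using y(3) cube_update[OF y(1)] pleq_update_True by (auto simp: max_zero_def)
  moreover have "y[j := False] = y"
    using y(4) list_update_id[of y j] by simp
  ultimately have "f (y[j := False]) \<noteq> f (y[j := True])"
    using y(2) by simp
  then show ?thesis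
    unfolding relevant_def using y(1) assms(2) by (intro conjI bexI[of _ y])
qed

lemma pleq_update_of_not_nth: "\<not> x ! i \<Longrightarrow> pleq x (x[i := b])"
  unfolding pleq_def by (cases "i < length x") (auto simp: nth_list_update)

lemma pleq_update_of_nth: "x ! i \<Longrightarrow> pleq (x[i := b]) x"
  unfolding pleq_def by (cases "i < length x") (auto simp: nth_list_update)

definition cofactor :: "(bool list \<Rightarrow> bool) \<Rightarrow> nat \<Rightarrow> bool \<Rightarrow> bool list \<Rightarrow> bool" where
  "cofactor f i b x = f (x[i := b])"

lemma cofactor_update [simp]: "cofactor f i b (x[i := c]) = cofactor f i b x"
  by (simp add: cofactor_def)

lemma positive_fun_cofactor: "positive_fun n f \<Longrightarrow> positive_fun n (cofactor f i b)"
  unfolding positive_fun_def cofactor_def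
  using positive_funD cube_update pleq_update_mono by blast

lemma relevant_cofactor_cases:
  assumes "relevant n f j" "j \<noteq> i"
  shows "relevant n (cofactor f i False) j \<or> relevant n (cofactor f i True) j"
proof -
  obtain x where x: "j < n" "x \<in> cube n" "f (x[j := False]) \<noteq> f (x[j := True])"
    using assms(1) by (auto simp: relevant_def)
  have "cofactor f i (x ! i) (x[j := c]) = f (x[j := c])" for c
    by (simp add: cofactor_def list_update_swap[OF assms(2)])
  then have "relevant n (cofactor f i (x ! i)) j"
    unfolding relevant_def using x by auto
  then show ?thesis
    by (cases "x ! i") auto
qed

lemma nth_extremal_cofactor:
  assumes "extremal n (cofactor f i b) p" "i < n"
  shows "p ! i \<longleftrightarrow> max_zero n (cofactor f i b) p"
proof -
  have i: "i < length p"
    using assms length_cube[OF extremal_in_cube[OF assms(1)]] by simp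
  show ?thesis
  proof (cases "min_one n (cofactor f i b) p")
    case True
    then have "p[i := False] = p"
      using cube_update pleq_update_False by (fastforce simp: min_one_def)
    then show ?thesis
      using True min_one_not_max_zero i by (simp add: list_update_same_conv)
  next
    case False
    then have mz: "max_zero n (cofactor f i b) p"
      using assms(1) by (simp add: extremal_def)
    then have "p[i := True] = p"
      using cube_update pleq_update_True by (fastforce simp: max_zero_def)
    then show ?thesis
      using mz i by (simp add: list_update_same_conv)
  qed
qed

definition cofactor_lift :: "(bool list \<Rightarrow> bool) \<Rightarrow> nat \<Rightarrow> bool \<Rightarrow> bool list \<Rightarrow> bool list" where
  "cofactor_lift f i b p = (if f p = cofactor f i b p then p else p[i := b])"

lemma nth_cofactor_lift_other: "j \<noteq> i \<Longrightarrow> cofactor_lift f i b p ! j = p ! j"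
  by (simp add: cofactor_lift_def)

lemma cofactor_lift_cases: "cofactor_lift f i b p = p \<or> cofactor_lift f i b p = p[i := b]"
  by (simp add: cofactor_lift_def)

lemma min_one_cofactor_lift:
  assumes pos: "positive_fun n f" and "i < n" and p: "min_one n (cofactor f i b) p"
  shows "min_one n f (cofactor_lift f i b p)"
proof -
  have p_cube: "p \<in> cube n" and cof_p: "cofactor f i b p"
    and p_least: "\<And>z. z \<in> cube n \<Longrightarrow> cofactor f i b z \<Longrightarrow> pleq z p \<Longrightarrow> z = p"
    using p by (auto simp: min_one_def)
  have not_pi: "\<not> p ! i"
    using nth_extremal_cofactor[of n f i b p] p \<open>i < n\<close> min_one_not_max_zero
    by (auto simp: extremal_def)
  show ?thesis
  proof (cases "f p")
    case True
    have "z = p" if "z \<in> cube n" "f z" "pleq z p" for z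
    proof -
      have "\<not> z ! i"
        using that(3) not_pi \<open>i < n\<close> by (auto simp: pleq_def length_cube[OF p_cube])
      then have "cofactor f i b z"
        using positive_funD[OF pos that(1) cube_update[OF that(1)] that(2) pleq_update_of_not_nth]
        by (simp add: cofactor_def)
      then show ?thesis
        using p_least that by blast
    qed
    then show ?thesis
      using True cof_p p_cube by (auto simp: cofactor_lift_def min_one_def)
  next
    case False
    then have b: "b = True"
      using cof_p not_pi list_update_id[of p i] by (cases b) (auto simp: cofactor_def)
    have q: "cofactor_lift f i b p = p[i := True]" "f (p[i := True])"
      using False cof_p b by (auto simp: cofactor_lift_def cofactor_def)
    have "w = p[i := True]" if "w \<in> cube n" "f w" "pleq w (p[i := True])" for w
    proof -
      have "pleq (w[i := False]) p"
        using pleq_update_mono[OF that(3), of i False] not_pi list_update_id[of p i] by simp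
      moreover have "cofactor f i b (w[i := False])"
        using positive_funD[OF pos that(1) cube_update[OF that(1)] that(2) pleq_update_True] b
        by (simp add: cofactor_def)
      ultimately have "w[i := False] = p"
        using p_least that(1) cube_update by blast
      then have "w = p[i := w ! i]"
        by (metis list_update_id list_update_overwrite)
      with False that(2) not_pi list_update_id[of p i] show ?thesis
        by (cases "w ! i") auto
    qed
    then show ?thesis
      using q p_cube cube_update by (auto simp: min_one_def)
  qed
qed

lemma max_zero_cofactor_lift:
  assumes pos: "positive_fun n f" and "i < n" and p: "max_zero n (cofactor f i b) p"
  shows "max_zero n f (cofactor_lift f i b p)"
proof -
  have p_cube: "p \<in> cube n" and cof_p: "\<not> cofactor f i b p"
    and p_greatest: "\<And>z. z \<in> cube n \<Longrightarrow> \<not> cofactor f i b z \<Longrightarrow> pleq p z \<Longrightarrow> z = p"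
    using p by (auto simp: max_zero_def)
  have pi: "p ! i"
    using nth_extremal_cofactor[of n f i b p] p \<open>i < n\<close> by (auto simp: extremal_def)
  show ?thesis
  proof (cases "f p")
    case False
    have "z = p" if "z \<in> cube n" "\<not> f z" "pleq p z" for z
    proof -
      have "z ! i"
        using that(3) pi \<open>i < n\<close> by (auto simp: pleq_def length_cube[OF p_cube])
      then have "\<not> cofactor f i b z"
        using positive_funD[OF pos cube_update[OF that(1)] that(1) _ pleq_update_of_nth] that(2)
        by (auto simp: cofactor_def)
      then show ?thesis
        using p_greatest that by blast
    qed
    then show ?thesis
      using False cof_p p_cube by (auto simp: cofactor_lift_def max_zero_def)
  next
    case True
    then have b: "b = False"
      using cof_p pi list_update_id[of p i] by (cases b) (auto simp: cofactor_def)
    have q: "cofactor_lift f i b p = p[i := False]" "\<not> f (p[i := False])"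
      using True cof_p b by (auto simp: cofactor_lift_def cofactor_def)
    have "w = p[i := False]" if "w \<in> cube n" "\<not> f w" "pleq (p[i := False]) w" for w
    proof -
      have "pleq p (w[i := True])"
        using pleq_update_mono[OF that(3), of i True] pi list_update_id[of p i] by simp
      moreover have "\<not> cofactor f i b (w[i := True])"
        using positive_funD[OF pos cube_update[OF that(1)] that(1) _ pleq_update_False] that(2) b
        by (auto simp: cofactor_def)
      ultimately have "w[i := True] = p"
        using p_greatest that(1) cube_update by blast
      then have "w = p[i := w ! i]"
        by (metis list_update_id list_update_overwrite)
      with True that(2) pi list_update_id[of p i] show ?thesis
        by (cases "w ! i") auto
    qed
    then show ?thesis
      using q p_cube cube_update by (auto simp: max_zero_def)
  qed
qed

lemma extremal_cofactor_lift:
  assumes "positive_fun n f" "i < n" "extremal n (cofactor f i b) p"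
  shows "extremal n f (cofactor_lift f i b p)"
    and "min_one n f (cofactor_lift f i b p) \<longleftrightarrow> min_one n (cofactor f i b) p"
proof -
  have "min_one n (cofactor f i b) p \<Longrightarrow> min_one n f (cofactor_lift f i b p)"
    and "max_zero n (cofactor f i b) p \<Longrightarrow> max_zero n f (cofactor_lift f i b p)"
    using assms min_one_cofactor_lift max_zero_cofactor_lift by blast+
  then show "extremal n f (cofactor_lift f i b p)"
    and "min_one n f (cofactor_lift f i b p) \<longleftrightarrow> min_one n (cofactor f i b) p"
    using assms(3) min_one_not_max_zero by (auto simp: extremal_def)
qed

lemma cofactor_lift_eq_imp_eq:
  assumes pos: "positive_fun n f" and "i < n"
    and p: "extremal n (cofactor f i b) p" and r: "extremal n (cofactor f i c) r"
    and eq: "cofactor_lift f i b p = cofactor_lift f i c r"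
  shows "p = r" and "min_one n (cofactor f i b) p \<longleftrightarrow> min_one n (cofactor f i c) r"
proof -
  show same_kind: "min_one n (cofactor f i b) p \<longleftrightarrow> min_one n (cofactor f i c) r"
    using extremal_cofactor_lift(2)[OF pos \<open>i < n\<close>] p r eq by metis
  have "p ! i \<longleftrightarrow> r ! i"
    using nth_extremal_cofactor[OF p \<open>i < n\<close>] nth_extremal_cofactor[OF r \<open>i < n\<close>] same_kind p r
      min_one_not_max_zero by (auto simp: extremal_def)
  then have "p ! j = r ! j" for j
    using eq nth_cofactor_lift_other[of j i] by (cases "j = i") metis+
  moreover have "length p = length r"
    using length_cube[OF extremal_in_cube[OF p]] length_cube[OF extremal_in_cube[OF r]] by simp
  ultimately show "p = r"
    by (auto intro: nth_equalityI)
qed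

definition corresponding_points :: "nat \<Rightarrow> (bool list \<Rightarrow> bool) \<Rightarrow> nat set \<Rightarrow> bool list set" where
  "corresponding_points n f S = {y. corresponds_to_set n f y S}"

lemma corresponding_points_empty [simp]: "corresponding_points n f {} = {}"
  by (simp add: corresponding_points_def corresponds_to_set_def)

lemma corresponding_points_subset_cube: "corresponding_points n f S \<subseteq> cube n"
  unfolding corresponding_points_def corresponds_to_set_def extremal_def min_one_def max_zero_def
  by blast

lemma finite_corresponding_points: "finite (corresponding_points n f S)"
  using finite_subset[OF corresponding_points_subset_cube finite_cube] .

lemma cofactor_lift_corresponding_points_subset:
  assumes "positive_fun n f" "i < n" "T \<subseteq> S" "i \<notin> T"
  shows "cofactor_lift f i b ` corresponding_points n (cofactor f i b) T \<subseteq> corresponding_points n f S"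
proof
  fix w assume "w \<in> cofactor_lift f i b ` corresponding_points n (cofactor f i b) T"
  then obtain p j where p: "extremal n (cofactor f i b) p" "j \<in> T"
    "corresponds_to_var n (cofactor f i b) p j" and w: "w = cofactor_lift f i b p"
    by (auto simp: corresponding_points_def corresponds_to_set_def)
  have "w ! j = p ! j"
    using w nth_cofactor_lift_other[of j i] p(2) assms(4) by blast
  then have "corresponds_to_var n f w j"
    using p(3) extremal_cofactor_lift[OF assms(1,2) p(1)] min_one_not_max_zero w
    by (auto simp: corresponds_to_var_def extremal_def)
  then show "w \<in> corresponding_points n f S"
    using p(2) assms(3) extremal_cofactor_lift(1)[OF assms(1,2) p(1)] w
    by (auto simp: corresponding_points_def corresponds_to_set_def)
qed

lemma inj_on_cofactor_lift:
  assumes "positive_fun n f" "i < n"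
  shows "inj_on (cofactor_lift f i b) (corresponding_points n (cofactor f i b) T)"
  using cofactor_lift_eq_imp_eq(1)[OF assms]
  by (auto intro: inj_onI simp: corresponding_points_def corresponds_to_set_def)

lemma cofactor_lift_images_disjoint:
  assumes pos: "positive_fun n f" and "i < n"
    and T1: "\<forall>l\<in>T1. l < n \<and> \<not> relevant n (cofactor f i False) l"
  shows "cofactor_lift f i False ` corresponding_points n (cofactor f i False) T0
    \<inter> cofactor_lift f i True ` corresponding_points n (cofactor f i True) T1 = {}"
proof -
  have False if p: "p \<in> corresponding_points n (cofactor f i False) T0"
    and r: "r \<in> corresponding_points n (cofactor f i True) T1"
    and eq: "cofactor_lift f i False p = cofactor_lift f i True r" for p r
  proof -
    obtain l where l: "l \<in> T1" "corresponds_to_var n (cofactor f i True) r l"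
      using r by (auto simp: corresponding_points_def corresponds_to_set_def)
    have pe: "extremal n (cofactor f i False) p" and re: "extremal n (cofactor f i True) r"
      using p r by (auto simp: corresponding_points_def corresponds_to_set_def)
    have "p = r" "min_one n (cofactor f i False) p \<longleftrightarrow> min_one n (cofactor f i True) r"
      using cofactor_lift_eq_imp_eq[OF pos \<open>i < n\<close> pe re eq] by auto
    then have "corresponds_to_var n (cofactor f i False) p l"
      using l(2) pe re min_one_not_max_zero by (auto simp: corresponds_to_var_def extremal_def)
    then show False
      using corresponds_to_var_imp_relevant T1 l(1) by blast
  qed
  then show ?thesis
    by blast
qed

lemma min_one_notin_cofactor_lift_False:
  assumes "positive_fun n f" "i < n" "min_one n f y" "y ! i"
  shows "y \<notin> cofactor_lift f i False ` corresponding_points n (cofactor f i False) T"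
proof
  assume "y \<in> cofactor_lift f i False ` corresponding_points n (cofactor f i False) T"
  then obtain p where p: "extremal n (cofactor f i False) p" and y: "y = cofactor_lift f i False p"
    by (auto simp: corresponding_points_def corresponds_to_set_def)
  then have "min_one n (cofactor f i False) p"
    using extremal_cofactor_lift(2)[OF assms(1,2) p] assms(3) by simp
  then have "\<not> p ! i"
    using nth_extremal_cofactor[OF p assms(2)] min_one_not_max_zero by blast
  then show False
    using cofactor_lift_cases[of f i False p] y assms(2,4) length_cube[OF extremal_in_cube[OF p]]
    by auto
qed

lemma max_zero_notin_cofactor_lift_True:
  assumes "positive_fun n f" "i < n" "max_zero n f y" "\<not> y ! i"
  shows "y \<notin> cofactor_lift f i True ` corresponding_points n (cofactor f i True) T"
proof
  assume "y \<in> cofactor_lift f i True ` corresponding_points n (cofactor f i True) T"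
  then obtain p where p: "extremal n (cofactor f i True) p" and y: "y = cofactor_lift f i True p"
    by (auto simp: corresponding_points_def corresponds_to_set_def)
  then have "max_zero n (cofactor f i True) p"
    using extremal_cofactor_lift(2)[OF assms(1,2) p] assms(3) min_one_not_max_zero p
    by (auto simp: extremal_def)
  then have "p ! i"
    using nth_extremal_cofactor[OF p assms(2)] by blast
  then show False
    using cofactor_lift_cases[of f i True p] y assms(2,4) length_cube[OF extremal_in_cube[OF p]]
    by auto
qed

lemma card_corresponding_points_gt:
  assumes "finite S" "S \<noteq> {}" "positive_fun n f" "\<forall>j\<in>S. relevant n f j"
  shows "card S < card (corresponding_points n f S)"
  using assms
proof (induction "card S" arbitrary: S f rule: less_induct)
  case less
  note pos = less.prems(3)
  obtain i where i: "i \<in> S"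
    using less.prems(2) by blast
  have rel_i: "relevant n f i" and "i < n"
    using less.prems(4) i by (auto simp: relevant_def)
  define E where "E = corresponding_points n f S"
  define S0 where "S0 = {j \<in> S - {i}. relevant n (cofactor f i False) j}"
  define S1 where "S1 = S - {i} - S0"
  define L0 where "L0 = cofactor_lift f i False ` corresponding_points n (cofactor f i False) S0"
  define L1 where "L1 = cofactor_lift f i True ` corresponding_points n (cofactor f i True) S1"
  have S1_irrelevant: "\<forall>j\<in>S1. j < n \<and> \<not> relevant n (cofactor f i False) j"
    and S1_relevant: "\<forall>j\<in>S1. relevant n (cofactor f i True) j"
    using less.prems(4) relevant_cofactor_cases[of n f _ i] by (auto simp: S0_def S1_def relevant_def)
  have card_S: "card S = card S0 + card S1 + 1"
  proof -
    have "S = insert i (S0 \<union> S1)" "i \<notin> S0 \<union> S1" "S0 \<inter> S1 = {}" "finite (S0 \<union> S1)"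
      using i less.prems(1) by (auto simp: S0_def S1_def)
    then show ?thesis
      by (simp add: card_Un_disjoint)
  qed
  have IH: "card T + 1 \<le> card (corresponding_points n (cofactor f i b) T) + (if T = {} then 1 else 0)"
    if "T \<subseteq> S - {i}" "\<forall>j\<in>T. relevant n (cofactor f i b) j" for T b
  proof (cases "T = {}")
    case False
    have "T \<subset> S"
      using that(1) i by blast
    then have "card T < card S"
      using less.prems(1) by (simp add: psubset_card_mono)
    then show ?thesis
      using less.hyps[OF _ _ False positive_fun_cofactor[OF pos] that(2)] that(1) less.prems(1) False
      by (simp add: finite_subset)
  qed simp
  have "S0 \<subseteq> S - {i}" "S1 \<subseteq> S - {i}" "\<forall>j\<in>S0. relevant n (cofactor f i False) j"
    by (auto simp: S0_def S1_def)
  moreover have "card L0 = card (corresponding_points n (cofactor f i False) S0)"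
    "card L1 = card (corresponding_points n (cofactor f i True) S1)"
    unfolding L0_def L1_def using inj_on_cofactor_lift[OF pos \<open>i < n\<close>] by (auto intro: card_image)
  ultimately have IH0: "card S0 + 1 \<le> card L0 + (if S0 = {} then 1 else 0)"
    and IH1: "card S1 + 1 \<le> card L1 + (if S1 = {} then 1 else 0)"
    using IH[of S0 False] IH[of S1 True] S1_relevant by simp_all
  have "L0 \<subseteq> E" "L1 \<subseteq> E"
    unfolding E_def L0_def L1_def
    using cofactor_lift_corresponding_points_subset[OF pos \<open>i < n\<close>, of _ S]
      \<open>S0 \<subseteq> S - {i}\<close> \<open>S1 \<subseteq> S - {i}\<close> by blast+
  have "L0 \<inter> L1 = {}"
    unfolding L0_def L1_def using cofactor_lift_images_disjoint[OF pos \<open>i < n\<close> S1_irrelevant] by blast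
  obtain y where y: "min_one n f y" "y ! i"
    using relevant_imp_ex_min_one[OF pos rel_i] .
  obtain z where z: "max_zero n f z" "\<not> z ! i"
    using relevant_imp_ex_max_zero[OF pos rel_i] .
  have "y \<notin> L0" "z \<notin> L1"
    unfolding L0_def L1_def
    using min_one_notin_cofactor_lift_False[OF pos \<open>i < n\<close> y]
      max_zero_notin_cofactor_lift_True[OF pos \<open>i < n\<close> z] by blast+
  have "y \<in> E" "z \<in> E"
    unfolding E_def corresponding_points_def corresponds_to_set_def extremal_def corresponds_to_var_def
    using y z i by blast+
  have "y \<noteq> z"
    using y(1) z(1) min_one_not_max_zero by blast
  define X where "X = (if S0 = {} then {z} else {}) \<union> (if S1 = {} then {y} else {})"
  have "card (L0 \<union> L1 \<union> X) = card L0 + card L1 + card X"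
  proof -
    have "(L0 \<union> L1) \<inter> X = {}"
      using \<open>y \<notin> L0\<close> \<open>z \<notin> L1\<close> by (auto simp: X_def L0_def L1_def)
    moreover have "finite (L0 \<union> L1)" "finite X"
      by (auto simp: L0_def L1_def X_def finite_corresponding_points)
    ultimately show ?thesis
      using \<open>L0 \<inter> L1 = {}\<close> by (simp add: card_Un_disjoint)
  qed
  moreover have "card X = (if S0 = {} then 1 else 0) + (if S1 = {} then 1 else 0)"
    using \<open>y \<noteq> z\<close> by (auto simp: X_def)
  moreover have "card (L0 \<union> L1 \<union> X) \<le> card E"
    using \<open>L0 \<subseteq> E\<close> \<open>L1 \<subseteq> E\<close> \<open>y \<in> E\<close> \<open>z \<in> E\<close>
    by (intro card_mono) (auto simp: E_def X_def finite_corresponding_points)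
  ultimately show ?case
    using card_S IH0 IH1 by (simp add: E_def)
qed

theorem mainTheorem2:
  fixes n k :: nat and f :: "bool list \<Rightarrow> bool" and S :: "nat set"
  assumes "positive_fun n f"
    and "S \<noteq> {}"
    and "\<forall>i\<in>S. relevant n f i"
    and "card S = k"
  shows "k + 1 \<le> card {y. corresponds_to_set n f y S}"
proof -
  have "finite S"
    using assms(3) finite_subset[of S "{..<n}"] by (auto simp: relevant_def)
  then show ?thesis
    using card_corresponding_points_gt[OF _ assms(2,1,3)] assms(4)
    by (simp add: corresponding_points_def)
qed

end
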